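(* Let $\theta$ be masked attention parameters with $d_{\mathrm{in}}(\theta)=d$ and let $\Gamma_\theta$ be the masked attention map, restricted to $\mathrm{Lip}_C^\sigma(\tilde\Omega)\times\tilde\Omega$. Then: (a) $\Gamma_\theta$ is causal and identifiable; (b) for all $(\mu,x,t)\in\mathrm{Lip}_C^\sigma(\tilde\Omega)\times\tilde\Omega$, $\Gamma_\theta(\mu,x,t)=\bar\Gamma_\theta(\mu_t,x)$; (c) the map $\mathcal{X}_C^\sigma\ni(\nu,x)\mapsto\bar\Gamma_\theta(\nu,x)$ is continuous for the product of the weak$^*$ and Euclidean topologies.
   Context: $\Omega\subset\mathbb{R}^d$ compact, $\tilde\Omega=\Omega\times[0,1]$, $C>0$, $\sigma\in(0,1)$, $\bar\mu$ the time marginal of $\mu$. $\mathrm{Lip}_C^\sigma(\tilde\Omega)$: all $\mu\in\mathcal{P}(\tilde\Omega)$ with $\bar\mu(\{0\})\ge\sigma$ admitting a disintegration $d\mu(x,s)=d\mu(x|s)d\bar\mu(s)$ with $W_2(\mu(\cdot|s),\mu(\cdot|t))\le C|s-t|$. Masked measure: $\mu_t=\frac{1_{[0,t]}}{\bar\mu([0,t])}\cdot\mu$, $t\in[0,1]$ (equal to $\mu(\cdot|0)\otimes\delta_0$ at $t=0$). Causal: $\Lambda(\mu,x,t)=\Lambda(\mu_t,x,t)$ for all $(\mu,x,t)\in\mathrm{Lip}_C^\sigma(\tilde\Omega)\times\tilde\Omega$. Identifiable: for $\mu\in\mathrm{Lip}_C^\sigma(\tilde\Omega)$, $t,t'\in[0,1]$,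 $\mu_t=\mu_{t'}$ implies $\Lambda(\mu_t,\cdot,t)=\Lambda(\mu_{t'},\cdot,t')$. Masked attention with $\theta=(W^h,K^h,Q^h,V^h)_{h=1}^H$, $K^h,Q^h\in\mathbb{R}^{k\times d_{\mathrm{in}}}$, $V^h\in\mathbb{R}^{d_{\mathrm{head}}\times d_{\mathrm{in}}}$, $W^h\in\mathbb{R}^{d_{\mathrm{in}}\times d_{\mathrm{head}}}$: $$\Gamma_\theta(\mu,x,t)=x+\sum_{h=1}^HW^h\int\frac{\exp(\frac1{\sqrt k}\langle Q^hx,K^hy\rangle)1_{[0,t]}(r)}{\int\exp(\frac1{\sqrt k}\langle Q^hx,K^hz\rangle)1_{[0,t]}(s)\,d\mu(z,s)}V^hy\,d\mu(y,r).$$ Reduced map: $\bar\Lambda(\mu,x)=\Lambda(\mu,x,e(\bar\mu))$ with $e(\bar\mu)=\max\operatorname{supp}(\bar\mu)$. $\mathcal{X}_C^\sigma=\{(\mu_t,x):\mu\in\mathrm{Lip}_C^\sigma(\tilde\Omega),x\in\Omega,t\in[0,1]\}$. *)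

theory Defs
  imports "HOL-Probability.Probability"
begin

type_synonym 'd tmeas = "((real^'d) \<times> real) measure"

definition tmarg :: "'d tmeas \<Rightarrow> real measure" where
  "tmarg \<mu> = distr \<mu> borel snd"

text \<open>Probability measures on \<Omega> x [0,1] (Borel measures on R^d x R concentrated there).\<close>
definition Pmeas :: "(real^'d) set \<Rightarrow> 'd tmeas set" where
  "Pmeas \<Omega> = {\<mu>. prob_space \<mu> \<and> sets \<mu> = sets borel \<and> emeasure \<mu> (\<Omega> \<times> {0..1}) = 1}"

definition couplings :: "(real^'d) measure \<Rightarrow> (real^'d) measure \<Rightarrow> ((real^'d) \<times> (real^'d)) measure set" where
  "couplings \<alpha> \<beta> = {\<pi>. prob_space \<pi> \<and> sets \<pi> = sets borel \<and>
      distr \<pi> borel fst = \<alpha> \<and> distr \<pi> borel snd = \<beta>}"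

definition W2 :: "(real^'d) measure \<Rightarrow> (real^'d) measure \<Rightarrow> real" where
  "W2 \<alpha> \<beta> = sqrt (INF \<pi>\<in>couplings \<alpha> \<beta>. \<integral>z. (norm (fst z - snd z))\<^sup>2 \<partial>\<pi>)"

text \<open>A disintegration of \<mu> w.r.t. its time marginal: a measurable probability kernel
  s \<mapsto> \<kappa> s with values in P(\<Omega>) such that d\<mu>(x,s) = d\<kappa>(s)(x) d\<mu>bar(s).\<close>
definition disintegration :: "(real^'d) set \<Rightarrow> 'd tmeas \<Rightarrow> (real \<Rightarrow> (real^'d) measure) \<Rightarrow> bool" where
  "disintegration \<Omega> \<mu> \<kappa> \<longleftrightarrow>
     \<kappa> \<in> measurable borel (prob_algebra borel) \<and>
     (\<forall>s\<in>{0..1}. emeasure (\<kappa> s) \<Omega> = 1) \<and>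
     (\<forall>A\<in>sets borel. emeasure \<mu> A = (\<integral>\<^sup>+ s. emeasure (\<kappa> s) {x. (x, s) \<in> A} \<partial>tmarg \<mu>))"

definition LipC :: "(real^'d) set \<Rightarrow> real \<Rightarrow> real \<Rightarrow> 'd tmeas set" where
  "LipC \<Omega> C \<sigma> = {\<mu>\<in>Pmeas \<Omega>. measure (tmarg \<mu>) {0} \<ge> \<sigma> \<and>
      (\<exists>\<kappa>. disintegration \<Omega> \<mu> \<kappa> \<and>
          (\<forall>s\<in>{0..1}. \<forall>t\<in>{0..1}. W2 (\<kappa> s) (\<kappa> t) \<le> C * \<bar>s - t\<bar>))}"

definition masked :: "'d tmeas \<Rightarrow> real \<Rightarrow> 'd tmeas" where
  "masked \<mu> t = density \<mu> (\<lambda>z. ennreal (indicator {0..t} (snd z) / measure (tmarg \<mu>) {0..t}))"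

definition causal :: "(real^'d) set \<Rightarrow> real \<Rightarrow> real \<Rightarrow> ('d tmeas \<Rightarrow> real^'d \<Rightarrow> real \<Rightarrow> 'b) \<Rightarrow> bool" where
  "causal \<Omega> C \<sigma> \<Lambda> \<longleftrightarrow>
     (\<forall>\<mu>\<in>LipC \<Omega> C \<sigma>. \<forall>x\<in>\<Omega>. \<forall>t\<in>{0..1}. \<Lambda> \<mu> x t = \<Lambda> (masked \<mu> t) x t)"

definition identifiable :: "(real^'d) set \<Rightarrow> real \<Rightarrow> real \<Rightarrow> ('d tmeas \<Rightarrow> real^'d \<Rightarrow> real \<Rightarrow> 'b) \<Rightarrow> bool" where
  "identifiable \<Omega> C \<sigma> \<Lambda> \<longleftrightarrow>
     (\<forall>\<mu>\<in>LipC \<Omega> C \<sigma>. \<forall>t\<in>{0..1}. \<forall>t'\<in>{0..1}. masked \<mu> t = masked \<mu> t' \<longrightarrow>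
        (\<forall>x\<in>\<Omega>. \<Lambda> (masked \<mu> t) x t = \<Lambda> (masked \<mu> t') x t'))"

definition msupp :: "real measure \<Rightarrow> real set" where
  "msupp \<nu> = {s. \<forall>e>0. emeasure \<nu> (ball s e) > 0}"

definition endtime :: "'d tmeas \<Rightarrow> real" where
  "endtime \<nu> = Sup (msupp (tmarg \<nu>))"

definition reduced :: "('d tmeas \<Rightarrow> real^'d \<Rightarrow> real \<Rightarrow> 'b) \<Rightarrow> 'd tmeas \<Rightarrow> real^'d \<Rightarrow> 'b" where
  "reduced \<Lambda> \<nu> x = \<Lambda> \<nu> x (endtime \<nu>)"

definition Xset :: "(real^'d) set \<Rightarrow> real \<Rightarrow> real \<Rightarrow> ('d tmeas \<times> (real^'d)) set" where
  "Xset \<Omega> C \<sigma> = {(masked \<mu> t, x) | \<mu> x t. \<mu> \<in> LipC \<Omega> C \<sigma> \<and> x \<in> \<Omega> \<and> t \<in> {0..1}}"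

definition weak_star :: "('a::topological_space) measure topology" where
  "weak_star = topology_generated_by
     {{\<mu>. (\<integral>z. f z \<partial>\<mu>) \<in> U} | f U. continuous_on UNIV f \<and> bounded (range f) \<and> open (U::real set)}"

text \<open>Parameters: a list of H heads (W^h, K^h, Q^h, V^h) with
  K^h, Q^h \<in> R^{k x d}, V^h \<in> R^{d_head x d}, W^h \<in> R^{d x d_head}.\<close>
type_synonym ('d, 'k, 'e) attn_params =
  "((real^'e^'d) \<times> (real^'d^'k) \<times> (real^'d^'k) \<times> (real^'d^'e)) list"

definition attn :: "('d, 'k::finite, 'e::finite) attn_params \<Rightarrow> 'd tmeas \<Rightarrow> real^'d \<Rightarrow> real \<Rightarrow> real^'d" where
  "attn \<theta> \<mu> x t = x + (\<Sum>(W, K, Q, V)\<leftarrow>\<theta>.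
      W *v (\<integral>yr. (exp ((1 / sqrt (real CARD('k))) * ((Q *v x) \<bullet> (K *v fst yr))) * indicator {0..t} (snd yr)
               / (\<integral>zs. exp ((1 / sqrt (real CARD('k))) * ((Q *v x) \<bullet> (K *v fst zs))) * indicator {0..t} (snd zs) \<partial>\<mu>))
             *\<^sub>R (V *v fst yr) \<partial>\<mu>))"

end

theory Submission
  imports Defs
begin

(* If a measure \<nu> on \<Omega> \<times> [0,1] lives on times in [0,t], the indicator 1_[0,t] in masked
   attention is \<nu>-a.e. equal to 1, so \<Gamma>(\<nu>,x,t) equals the unmasked attention \<Gamma>0(\<nu>,x), which does
   not depend on t.  A masked measure \<mu>_t lives on [0,t] and hence also on [0, e(\<mu>_t)]; this gives
   (b) and identifiability, while causality holds because the normalisation 1/\<mu>bar([0,t]) of \<mu>_t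
   cancels in the softmax ratio.  For (c) it then suffices that \<Gamma>0 is jointly continuous on
   probability measures concentrated on the compact set \<Omega>: each head is built from integrals
   \<integral> g(x,y) d\<nu>(y) with g continuous and a positive denominator, and such parametric integrals are
   continuous for the weak-* \<times> Euclidean topology since g is uniformly continuous on \<Omega> \<times> \<Omega>. *)

lemma continuous_on_matrix_vector_mult [continuous_intros]:
  "continuous_on S f \<Longrightarrow> continuous_on S (\<lambda>x. (A::real^'a^'b) *v f x)"
  using continuous_on_compose2[OF matrix_vector_mult_linear_continuous_on] by blast

lemma borel_measurable_continuous_on_UNIV:
  "sets \<nu> = sets borel \<Longrightarrow> continuous_on UNIV f \<Longrightarrow> f \<in> borel_measurable \<nu>"
  by (metis borel_measurable_continuous_onI measurable_cong_sets)

lemma measurable_snd_tmeas: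
  fixes \<nu> :: "('d::finite) tmeas"
  shows "sets \<nu> = sets borel \<Longrightarrow> snd \<in> measurable \<nu> borel"
  by (rule borel_measurable_continuous_on_UNIV) (auto intro!: continuous_intros)

lemma borel_measurable_time_indicator:
  fixes \<nu> :: "('d::finite) tmeas"
  assumes "sets \<nu> = sets borel"
  shows "(\<lambda>z. indicator {0..t} (snd z) :: real) \<in> borel_measurable \<nu>"
  using measurable_snd_tmeas[OF assms] by (rule measurable_compose) simp

section \<open>Masked measures and the end time\<close>

lemma sets_tmarg [simp]: "sets (tmarg \<mu>) = sets borel"
  by (simp add: tmarg_def)

lemma prob_space_tmarg:
  fixes \<mu> :: "('d::finite) tmeas"
  assumes "prob_space \<mu>" "sets \<mu> = sets borel"
  shows "prob_space (tmarg \<mu>)"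
  unfolding tmarg_def using assms(1) measurable_snd_tmeas[OF assms(2)] by (rule prob_space.prob_space_distr)

lemma sets_masked [simp]: "sets (masked \<mu> t) = sets \<mu>"
  by (simp add: masked_def)

lemma prob_space_masked:
  fixes \<mu> :: "('d::finite) tmeas"
  assumes p: "prob_space \<mu>" and s: "sets \<mu> = sets borel" and pos: "measure (tmarg \<mu>) {0..t} > 0"
  shows "prob_space (masked \<mu> t)"
proof -
  define m where "m = measure (tmarg \<mu>) {0..t}"
  have space: "space \<mu> = UNIV"
    using s by (metis sets_eq_imp_space_eq space_borel)
  have window: "snd -` {0..t} \<in> sets \<mu>"
    using measurable_sets[OF measurable_snd_tmeas[OF s], of "{0..t}"] by (simp add: space)
  have "emeasure (masked \<mu> t) UNIV = (\<integral>\<^sup>+z. ennreal (1 / m) * indicator (snd -` {0..t}) z \<partial>\<mu>)"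
    unfolding masked_def m_def[symmetric] using borel_measurable_time_indicator[OF s]
    by (subst emeasure_density) (auto simp: s space intro!: nn_integral_cong split: split_indicator)
  also have "\<dots> = ennreal (1 / m) * emeasure (tmarg \<mu>) {0..t}"
    using window measurable_snd_tmeas[OF s]
    by (simp add: nn_integral_cmult_indicator tmarg_def emeasure_distr space)
  also have "\<dots> = 1"
  proof -
    interpret prob_space "tmarg \<mu>" using prob_space_tmarg[OF p s] .
    show ?thesis using pos by (simp add: m_def emeasure_eq_measure ennreal_mult[symmetric])
  qed
  finally show ?thesis
    using space by (intro prob_spaceI) (simp add: masked_def)
qed

lemma AE_masked:
  fixes \<mu> :: "('d::finite) tmeas"
  assumes s: "sets \<mu> = sets borel" and ae: "AE z in \<mu>. P z"
  shows "AE z in masked \<mu> t. P z \<and> snd z \<in> {0..t}"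
proof -
  have "AE z in \<mu>. 0 < ennreal (indicator {0..t} (snd z) / measure (tmarg \<mu>) {0..t}) \<longrightarrow> P z \<and> snd z \<in> {0..t}"
    using ae by eventually_elim (auto simp: indicator_def)
  then show ?thesis
    unfolding masked_def using borel_measurable_time_indicator[OF s] by (subst AE_density) auto
qed

lemma AE_not_in_compact_locally_null:
  fixes T :: "'a::metric_space measure"
  assumes K: "compact K" and s: "sets T = sets borel"
    and null: "\<And>s. s \<in> K \<Longrightarrow> \<exists>r>0. emeasure T (ball s r) = 0"
  shows "AE u in T. u \<notin> K"
proof -
  obtain r where r: "\<And>s. s \<in> K \<Longrightarrow> r s > 0 \<and> emeasure T (ball s (r s)) = 0"
    using null by metis
  have "K \<subseteq> (\<Union>s\<in>K. ball s (r s))"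
    using r by force
  then obtain F where F: "F \<subseteq> K" "finite F" "K \<subseteq> (\<Union>s\<in>F. ball s (r s))"
    by (rule compactE_image[OF K, rotated]) auto
  have "(\<Union>s\<in>F. ball s (r s)) \<in> null_sets T"
    using F r s by (intro null_sets.finite_UN) (auto intro!: null_setsI)
  from AE_not_in[OF this] show ?thesis
    by eventually_elim (use F(3) in blast)
qed

(* No nonemptiness of the support is needed: if msupp T = {}, then T vanishes near
   every point of [0,t], so the claim holds whatever the junk value Sup {} is. *)
lemma AE_le_Sup_msupp:
  fixes T :: "real measure"
  assumes s: "sets T = sets borel" and ae: "AE u in T. u \<in> {0..t}"
  shows "AE u in T. u \<in> {0..Sup (msupp T)}"
proof -
  have null: "\<exists>r>0. emeasure T (ball s r) = 0" if "s \<notin> msupp T" for s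
    using that unfolding msupp_def by (auto simp: not_less)
  have le_t: "s \<le> t" if "s \<in> msupp T" for s
  proof (rule ccontr)
    assume "\<not> s \<le> t"
    then have "ball s (s - t) \<subseteq> - {0..t}"
      by (auto simp: dist_real_def)
    moreover have "- {0..t} \<in> null_sets T"
      using ae s by (subst AE_iff_null_sets) auto
    ultimately have "ball s (s - t) \<in> null_sets T"
      using s by (metis null_sets_subset open_ball borel_open)
    then have "emeasure T (ball s (s - t)) = 0"
      by auto
    moreover have "0 < emeasure T (ball s (s - t))"
      using that \<open>\<not> s \<le> t\<close> unfolding msupp_def by simp
    ultimately show False
      by simp
  qed
  have le_Sup: "s \<le> Sup (msupp T)" if "s \<in> msupp T" for s
    using le_t by (intro cSup_upper[OF that] bdd_aboveI)
  let ?e = "Sup (msupp T)"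
  have "AE u in T. u \<notin> {?e + inverse (Suc n) .. t}" for n
  proof (rule AE_not_in_compact_locally_null[OF _ s])
    fix s assume s: "s \<in> {?e + inverse (Suc n) .. t}"
    have "0 < inverse (real (Suc n))"
      by simp
    with s have "?e < s"
      unfolding atLeastAtMost_iff by linarith
    then have "s \<notin> msupp T"
      using le_Sup by force
    then show "\<exists>r>0. emeasure T (ball s r) = 0"
      by (rule null)
  qed simp
  then have "AE u in T. \<forall>n. u \<notin> {?e + inverse (Suc n) .. t}"
    unfolding AE_all_countable by blast
  with ae show ?thesis
  proof eventually_elim
    case (elim u)
    have "\<not> ?e < u"
    proof
      assume "?e < u"
      then obtain n where "inverse (Suc n) < u - ?e"
        using reals_Archimedean by (metis diff_gt_0_iff_gt)
      with elim(1) have "u \<in> {?e + inverse (Suc n) .. t}"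
        unfolding atLeastAtMost_iff by linarith
      with elim(2) show False
        by blast
    qed
    with elim show ?case
      by auto
  qed
qed

lemma AE_time_le_endtime:
  fixes \<nu> :: "('d::finite) tmeas"
  assumes s: "sets \<nu> = sets borel" and ae: "AE z in \<nu>. snd z \<in> {0..t}"
  shows "AE z in \<nu>. snd z \<in> {0..endtime \<nu>}"
proof -
  have "AE u in tmarg \<nu>. u \<in> {0..t}"
    unfolding tmarg_def using ae measurable_snd_tmeas[OF s] by (subst AE_distr_iff) auto
  then have "AE u in tmarg \<nu>. u \<in> {0..endtime \<nu>}"
    unfolding endtime_def by (rule AE_le_Sup_msupp[OF sets_tmarg])
  then show ?thesis
    unfolding tmarg_def using measurable_snd_tmeas[OF s] by (subst (asm) AE_distr_iff) auto
qed

section \<open>Masked and unmasked attention\<close>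

definition masked_mean ::
    "'d tmeas \<Rightarrow> real \<Rightarrow> ((real^'d) \<times> real \<Rightarrow> real) \<Rightarrow> ((real^'d) \<times> real \<Rightarrow> real^'e) \<Rightarrow> real^'e" where
  "masked_mean \<nu> t w v =
     (\<integral>y. (w y * indicator {0..t} (snd y) / (\<integral>z. w z * indicator {0..t} (snd z) \<partial>\<nu>)) *\<^sub>R v y \<partial>\<nu>)"

definition weighted_mean :: "'a measure \<Rightarrow> ('a \<Rightarrow> real) \<Rightarrow> ('a \<Rightarrow> real^'e) \<Rightarrow> real^'e" where
  "weighted_mean \<nu> w v = (1 / (\<integral>z. w z \<partial>\<nu>)) *\<^sub>R (\<integral>z. w z *\<^sub>R v z \<partial>\<nu>)"

lemma masked_mean_eq_weighted_mean:
  fixes \<nu> :: "('d::finite) tmeas"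
  assumes s: "sets \<nu> = sets borel" and ae: "AE z in \<nu>. snd z \<in> {0..t}"
    and w: "w \<in> borel_measurable \<nu>" and v: "v \<in> borel_measurable \<nu>"
  shows "masked_mean \<nu> t w v = weighted_mean \<nu> w v"
proof -
  note I = borel_measurable_time_indicator[OF s]
  have denom: "(\<integral>z. w z * indicator {0..t} (snd z) \<partial>\<nu>) = (\<integral>z. w z \<partial>\<nu>)"
    using w I ae by (intro integral_cong_AE) (auto elim: eventually_mono)
  have "masked_mean \<nu> t w v = (\<integral>y. (1 / (\<integral>z. w z \<partial>\<nu>)) *\<^sub>R (w y *\<^sub>R v y) \<partial>\<nu>)"
    unfolding masked_mean_def denom
  proof (intro integral_cong_AE)
    show "AE y in \<nu>. (w y * indicator {0..t} (snd y) / (\<integral>z. w z \<partial>\<nu>)) *\<^sub>R v y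
        = (1 / (\<integral>z. w z \<partial>\<nu>)) *\<^sub>R (w y *\<^sub>R v y)"
      using ae by eventually_elim simp
  qed (use w I v in auto)
  then show ?thesis
    unfolding weighted_mean_def by (simp only: integral_scaleR_right)
qed

(* The normalising constant of the masked measure cancels in the softmax ratio. *)
lemma masked_mean_masked:
  fixes \<mu> :: "('d::finite) tmeas"
  assumes s: "sets \<mu> = sets borel" and pos: "measure (tmarg \<mu>) {0..t} > 0"
    and w: "w \<in> borel_measurable \<mu>" and v: "v \<in> borel_measurable \<mu>"
  shows "masked_mean (masked \<mu> t) t w v = masked_mean \<mu> t w v"
proof -
  define m where "m = measure (tmarg \<mu>) {0..t}"
  define g where "g z = indicator {0..t} (snd z) / m" for z :: "(real^'d) \<times> real"
  define D where "D = (\<integral>z. w z * indicator {0..t} (snd z) \<partial>\<mu>)"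
  note I = borel_measurable_time_indicator[OF s]
  have g: "g \<in> borel_measurable \<mu>" "AE z in \<mu>. 0 \<le> g z"
    unfolding g_def using I pos by (auto simp: m_def)
  have masked: "masked \<mu> t = density \<mu> (\<lambda>z. ennreal (g z))"
    unfolding masked_def g_def m_def ..
  have "(\<integral>z. w z * indicator {0..t} (snd z) \<partial>masked \<mu> t) = (\<integral>z. g z *\<^sub>R (w z * indicator {0..t} (snd z)) \<partial>\<mu>)"
    unfolding masked using w I g by (intro integral_density) auto
  also have "\<dots> = (\<integral>z. w z * indicator {0..t} (snd z) / m \<partial>\<mu>)"
    by (intro Bochner_Integration.integral_cong) (auto simp: g_def indicator_def)
  also have "\<dots> = D / m"
    by (simp add: D_def)
  finally have denom: "(\<integral>z. w z * indicator {0..t} (snd z) \<partial>masked \<mu> t) = D / m" .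
  have "masked_mean (masked \<mu> t) t w v
      = (\<integral>y. g y *\<^sub>R ((w y * indicator {0..t} (snd y) / (D / m)) *\<^sub>R v y) \<partial>\<mu>)"
    unfolding masked_mean_def denom unfolding masked using w I g v by (intro integral_density) auto
  also have "\<dots> = masked_mean \<mu> t w v"
    unfolding masked_mean_def D_def[symmetric] using pos
    by (intro Bochner_Integration.integral_cong) (auto simp: g_def m_def indicator_def)
  finally show ?thesis .
qed

definition attn_kernel :: "real^'d^'k \<Rightarrow> real^'d^'k \<Rightarrow> real^'d \<Rightarrow> real^'d \<Rightarrow> real" where
  "attn_kernel K Q x y = exp ((1 / sqrt (real CARD('k))) * ((Q *v x) \<bullet> (K *v y)))"

definition attn_unmasked :: "('d, 'k::finite, 'e::finite) attn_params \<Rightarrow> 'd tmeas \<Rightarrow> real^'d \<Rightarrow> real^'d" where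
  "attn_unmasked \<theta> \<nu> x = x + (\<Sum>(W, K, Q, V)\<leftarrow>\<theta>.
      W *v weighted_mean \<nu> (\<lambda>z. attn_kernel K Q x (fst z)) (\<lambda>z. V *v fst z))"

lemma attn_eq_masked_mean:
  "attn \<theta> \<nu> x t = x + (\<Sum>(W, K, Q, V)\<leftarrow>\<theta>.
      W *v masked_mean \<nu> t (\<lambda>z. attn_kernel K Q x (fst z)) (\<lambda>z. V *v fst z))"
  unfolding attn_def masked_mean_def attn_kernel_def ..

lemma continuous_on_attn_kernel [continuous_intros]:
  "continuous_on S f \<Longrightarrow> continuous_on S g \<Longrightarrow> continuous_on S (\<lambda>z. attn_kernel K Q (f z) (g z))"
  unfolding attn_kernel_def by (intro continuous_intros)

lemma attn_kernel_pos: "0 < attn_kernel K Q x y"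
  by (simp add: attn_kernel_def)

lemma attn_eq_attn_unmasked:
  fixes \<nu> :: "('d::finite) tmeas" and \<theta> :: "('d, 'k::finite, 'e::finite) attn_params"
  assumes s: "sets \<nu> = sets borel" and ae: "AE z in \<nu>. snd z \<in> {0..t}"
  shows "attn \<theta> \<nu> x t = attn_unmasked \<theta> \<nu> x"
proof -
  have "masked_mean \<nu> t (\<lambda>z. attn_kernel K Q x (fst z)) (\<lambda>z. V *v fst z)
      = weighted_mean \<nu> (\<lambda>z. attn_kernel K Q x (fst z)) (\<lambda>z. V *v fst z)"
    for K Q :: "real^'d^'k" and V :: "real^'d^'e"
    by (intro masked_mean_eq_weighted_mean[OF s ae] borel_measurable_continuous_on_UNIV[OF s])
       (auto intro!: continuous_intros)
  then show ?thesis
    unfolding attn_eq_masked_mean attn_unmasked_def by simp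
qed

lemma attn_masked:
  fixes \<mu> :: "('d::finite) tmeas" and \<theta> :: "('d, 'k::finite, 'e::finite) attn_params"
  assumes s: "sets \<mu> = sets borel" and pos: "measure (tmarg \<mu>) {0..t} > 0"
  shows "attn \<theta> (masked \<mu> t) x t = attn \<theta> \<mu> x t"
proof -
  have "masked_mean (masked \<mu> t) t (\<lambda>z. attn_kernel K Q x (fst z)) (\<lambda>z. V *v fst z)
      = masked_mean \<mu> t (\<lambda>z. attn_kernel K Q x (fst z)) (\<lambda>z. V *v fst z)"
    for K Q :: "real^'d^'k" and V :: "real^'d^'e"
    by (intro masked_mean_masked[OF s pos] borel_measurable_continuous_on_UNIV[OF s])
       (auto intro!: continuous_intros)
  then show ?thesis
    unfolding attn_eq_masked_mean by simp
qed

lemma reduced_attn_eq_attn_unmasked: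
  fixes \<nu> :: "('d::finite) tmeas"
  assumes "sets \<nu> = sets borel" "AE z in \<nu>. snd z \<in> {0..t}"
  shows "reduced (attn \<theta>) \<nu> x = attn_unmasked \<theta> \<nu> x"
  unfolding reduced_def using assms(1) AE_time_le_endtime[OF assms] by (rule attn_eq_attn_unmasked)

definition probs_on :: "(real^'d) set \<Rightarrow> ('d::finite) tmeas set" where
  "probs_on \<Omega> = {\<nu>. prob_space \<nu> \<and> sets \<nu> = sets borel \<and> (AE z in \<nu>. fst z \<in> \<Omega>)}"

lemma LipC_subset_probs_on: "LipC \<Omega> C \<sigma> \<subseteq> probs_on \<Omega>"
proof
  fix \<mu> assume "\<mu> \<in> LipC \<Omega> C \<sigma>"
  then have p: "prob_space \<mu>" and s: "sets \<mu> = sets borel" and "emeasure \<mu> (\<Omega> \<times> {0..1}) = 1"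
    by (auto simp: LipC_def Pmeas_def)
  then have "AE z in \<mu>. z \<in> \<Omega> \<times> {0..1}"
    by (intro prob_space.AE_prob_1[OF p]) (simp add: measure_def)
  with p s show "\<mu> \<in> probs_on \<Omega>"
    unfolding probs_on_def by (auto elim: eventually_mono)
qed

lemma measure_tmarg_window_pos:
  assumes \<mu>: "\<mu> \<in> LipC \<Omega> C \<sigma>" and "\<sigma> > 0" "t \<ge> 0"
  shows "measure (tmarg \<mu>) {0..t} > 0"
proof -
  have "\<mu> \<in> probs_on \<Omega>"
    using \<mu> LipC_subset_probs_on by blast
  then have "prob_space (tmarg \<mu>)"
    unfolding probs_on_def by (blast intro: prob_space_tmarg)
  then have "measure (tmarg \<mu>) {0} \<le> measure (tmarg \<mu>) {0..t}"
    using \<open>t \<ge> 0\<close> by (intro finite_measure.finite_measure_mono prob_space.finite_measure) auto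
  moreover have "\<sigma> \<le> measure (tmarg \<mu>) {0}"
    using \<mu> by (simp add: LipC_def)
  ultimately show ?thesis
    using \<open>\<sigma> > 0\<close> by linarith
qed

lemma masked_in_probs_on:
  assumes "\<nu> \<in> probs_on \<Omega>" "measure (tmarg \<nu>) {0..t} > 0"
  shows "masked \<nu> t \<in> probs_on \<Omega>"
proof -
  have p: "prob_space \<nu>" and s: "sets \<nu> = sets borel" and ae: "AE z in \<nu>. fst z \<in> \<Omega>"
    using assms(1) by (auto simp: probs_on_def)
  have "AE z in masked \<nu> t. fst z \<in> \<Omega>"
    using AE_masked[OF s ae] by (rule eventually_mono) simp
  with prob_space_masked[OF p s assms(2)] s show ?thesis
    by (simp add: probs_on_def)
qed

lemma masked_LipC:
  assumes "\<mu> \<in> LipC \<Omega> C \<sigma>" "\<sigma> > 0" "t \<in> {0..1}"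
  shows "masked \<mu> t \<in> probs_on \<Omega>" "AE z in masked \<mu> t. snd z \<in> {0..t}"
proof -
  have \<mu>: "\<mu> \<in> probs_on \<Omega>"
    using assms(1) LipC_subset_probs_on by blast
  show "masked \<mu> t \<in> probs_on \<Omega>"
    using assms by (intro masked_in_probs_on[OF \<mu>] measure_tmarg_window_pos) auto
  show "AE z in masked \<mu> t. snd z \<in> {0..t}"
    using \<mu> AE_masked[of \<mu> "\<lambda>_. True"] by (auto simp: probs_on_def)
qed

lemma attn_masked_LipC_eq_attn_unmasked:
  assumes "\<mu> \<in> LipC \<Omega> C \<sigma>" "\<sigma> > 0" "t \<in> {0..1}"
  shows "attn \<theta> (masked \<mu> t) x t = attn_unmasked \<theta> (masked \<mu> t) x"
    and "reduced (attn \<theta>) (masked \<mu> t) x = attn_unmasked \<theta> (masked \<mu> t) x"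
proof -
  have s: "sets (masked \<mu> t) = sets borel"
    using masked_LipC(1)[OF assms] by (auto simp: probs_on_def)
  note ae = masked_LipC(2)[OF assms]
  show "attn \<theta> (masked \<mu> t) x t = attn_unmasked \<theta> (masked \<mu> t) x"
    by (rule attn_eq_attn_unmasked[OF s ae])
  show "reduced (attn \<theta>) (masked \<mu> t) x = attn_unmasked \<theta> (masked \<mu> t) x"
    by (rule reduced_attn_eq_attn_unmasked[OF s ae])
qed

section \<open>Weak-* continuity of unmasked attention\<close>

lemma integrable_probs_on:
  fixes f :: "real^'d \<Rightarrow> 'b::{banach, second_countable_topology}"
  assumes \<Omega>: "compact \<Omega>" and \<nu>: "\<nu> \<in> probs_on \<Omega>" and f: "continuous_on UNIV f"
  shows "integrable \<nu> (\<lambda>z. f (fst z))"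
proof -
  have p: "prob_space \<nu>" and s: "sets \<nu> = sets borel" and ae: "AE z in \<nu>. fst z \<in> \<Omega>"
    using \<nu> by (auto simp: probs_on_def)
  have "compact (f ` \<Omega>)"
    using \<Omega> f by (auto intro: compact_continuous_image continuous_on_subset)
  then obtain B where "\<And>y. y \<in> \<Omega> \<Longrightarrow> norm (f y) \<le> B"
    by (meson bounded_iff compact_imp_bounded imageI)
  then have "AE z in \<nu>. norm (f (fst z)) \<le> B"
    using ae by (auto elim: eventually_mono)
  moreover have "(\<lambda>z. f (fst z)) \<in> borel_measurable \<nu>"
    using s by (intro borel_measurable_continuous_on_UNIV continuous_on_compose2[OF f]) (auto intro: continuous_intros)
  ultimately show ?thesis
    using p by (intro finite_measure.integrable_const_bound prob_space.finite_measure)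
qed

lemma topspace_weak_star [simp]: "topspace weak_star = UNIV"
proof -
  have "UNIV \<in> {{\<mu>. (\<integral>z. f z \<partial>\<mu>) \<in> U} | f U. continuous_on UNIV f \<and> bounded (range f) \<and> open (U::real set)}"
    by (auto intro!: exI[of _ "\<lambda>_::'a. 0::real"] exI[of _ "UNIV::real set"])
  then show ?thesis
    unfolding weak_star_def by auto
qed

lemma continuous_map_weak_star_integral:
  fixes f :: "'a::topological_space \<Rightarrow> real"
  assumes "continuous_on UNIV f" "bounded (range f)"
  shows "continuous_map weak_star euclidean (\<lambda>\<mu>. \<integral>z. f z \<partial>\<mu>)"
proof -
  have open_preimage: "openin weak_star {\<mu>. (\<integral>z. f z \<partial>\<mu>) \<in> U}" if "open U" for U
    unfolding weak_star_def using assms that by (intro topology_generated_by_Basis) blast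
  then show ?thesis
    by (simp add: continuous_map_def)
qed

lemma bounded_continuous_truncation:
  fixes f :: "'a::topological_space \<Rightarrow> real"
  assumes f: "continuous_on UNIV f" and K: "compact K"
  obtains h where "continuous_on UNIV h" "bounded (range h)" "\<And>y. y \<in> K \<Longrightarrow> h y = f y"
proof -
  have "compact (f ` K)"
    using K f by (auto intro: compact_continuous_image continuous_on_subset)
  then obtain M where M: "\<And>y. y \<in> K \<Longrightarrow> \<bar>f y\<bar> \<le> M"
    by (metis bounded_iff compact_imp_bounded imageI real_norm_def)
  show thesis
  proof
    show "continuous_on UNIV (\<lambda>y. max (- M) (min M (f y)))"
      using f by (intro continuous_intros)
    show "bounded (range (\<lambda>y. max (- M) (min M (f y))))"
      by (rule boundedI[of _ "\<bar>M\<bar>"]) auto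
    show "max (- M) (min M (f y)) = f y" if "y \<in> K" for y
      using M[OF that] by auto
  qed
qed

lemma integral_param_uniformly_close:
  fixes g :: "(real^'d) \<times> (real^'d) \<Rightarrow> real"
  assumes \<Omega>: "compact \<Omega>" and g: "continuous_on UNIV g" and x0: "x0 \<in> \<Omega>" and e: "e > 0"
  obtains \<delta> where "\<delta> > 0"
    "\<And>\<nu> x. \<nu> \<in> probs_on \<Omega> \<Longrightarrow> x \<in> \<Omega> \<Longrightarrow> dist x x0 < \<delta> \<Longrightarrow>
       \<bar>(\<integral>z. g (x, fst z) \<partial>\<nu>) - (\<integral>z. g (x0, fst z) \<partial>\<nu>)\<bar> \<le> e"
proof -
  have "uniformly_continuous_on (\<Omega> \<times> \<Omega>) g"
    using \<Omega> g by (intro compact_uniformly_continuous compact_Times) (auto intro: continuous_on_subset)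
  then obtain \<delta> where \<delta>: "\<delta> > 0"
    and uc: "\<And>a b. a \<in> \<Omega> \<times> \<Omega> \<Longrightarrow> b \<in> \<Omega> \<times> \<Omega> \<Longrightarrow> dist b a < \<delta> \<Longrightarrow> dist (g b) (g a) < e"
    unfolding uniformly_continuous_on_def using e by metis
  have slice: "continuous_on UNIV (\<lambda>y. g (x, y))" for x
    by (rule continuous_on_compose2[OF g]) (auto intro!: continuous_intros)
  show thesis
  proof (rule that[OF \<delta>])
    fix \<nu> x assume \<nu>: "\<nu> \<in> probs_on \<Omega>" and x: "x \<in> \<Omega>" "dist x x0 < \<delta>"
    interpret prob_space \<nu>
      using \<nu> by (simp add: probs_on_def)
    have "AE z in \<nu>. fst z \<in> \<Omega>"
      using \<nu> by (simp add: probs_on_def)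
    then have "AE z in \<nu>. \<bar>g (x, fst z) - g (x0, fst z)\<bar> \<le> e"
      by eventually_elim (use uc[of "(x0, _)" "(x, _)"] x x0 in \<open>force simp: dist_Pair_Pair dist_real_def\<close>)
    moreover have "integrable \<nu> (\<lambda>z. g (x, fst z) - g (x0, fst z))"
      using integrable_probs_on[OF \<Omega> \<nu> slice] by auto
    ultimately have "(\<integral>z. \<bar>g (x, fst z) - g (x0, fst z)\<bar> \<partial>\<nu>) \<le> e"
      by (intro integral_le_const) auto
    then show "\<bar>(\<integral>z. g (x, fst z) \<partial>\<nu>) - (\<integral>z. g (x0, fst z) \<partial>\<nu>)\<bar> \<le> e"
      using integral_abs_bound[of \<nu> "\<lambda>z. g (x, fst z) - g (x0, fst z)"]
        integrable_probs_on[OF \<Omega> \<nu> slice] by simp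
  qed
qed

lemma eventually_atin_subtopology_mem: "\<forall>\<^sub>F q in atin (subtopology X S) p. q \<in> S"
  unfolding eventually_atin
  by (metis Diff_subset Int_iff openin_topspace subsetD topspace_subtopology)

(* Near (\<nu>0, x0) write \<integral> g(x,.) d\<nu> = \<integral> (g(x,.) - g(x0,.)) d\<nu> + \<integral> g(x0,.) d\<nu>.  The first term
   is small uniformly in \<nu> by uniform continuity of g on \<Omega> \<times> \<Omega>; the second is weak-* continuous
   in \<nu>, because on \<Omega> the slice g(x0,.) agrees with a bounded continuous test function. *)
lemma continuous_map_integral_param:
  fixes g :: "(real^'d) \<times> (real^'d) \<Rightarrow> real"
  assumes \<Omega>: "compact \<Omega>" and g: "continuous_on UNIV g"
  shows "continuous_map (subtopology (prod_topology weak_star euclidean) (probs_on \<Omega> \<times> \<Omega>)) euclidean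
           (\<lambda>q. \<integral>z. g (snd q, fst z) \<partial>fst q)"
  (is "continuous_map ?X _ _")
proof -
  have "((\<lambda>q. \<integral>z. g (snd q, fst z) \<partial>fst q) \<longlongrightarrow> (\<integral>z. g (x0, fst z) \<partial>\<nu>0)) (atin ?X (\<nu>0, x0))"
    if \<nu>0: "\<nu>0 \<in> probs_on \<Omega>" and x0: "x0 \<in> \<Omega>" for \<nu>0 x0
  proof -
    let ?F = "atin ?X (\<nu>0, x0)"
    have p_top: "(\<nu>0, x0) \<in> topspace ?X"
      using that by simp
    have in_S: "\<forall>\<^sub>F q in ?F. q \<in> probs_on \<Omega> \<times> \<Omega>"
      by (rule eventually_atin_subtopology_mem)
    have "continuous_on UNIV (\<lambda>y. g (x0, y))"
      by (rule continuous_on_compose2[OF g]) (auto intro!: continuous_intros)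
    then obtain h where h: "continuous_on UNIV h" "bounded (range h)" "\<And>y. y \<in> \<Omega> \<Longrightarrow> h y = g (x0, y)"
      using bounded_continuous_truncation[OF _ \<Omega>] by blast
    have h_eq: "(\<integral>z. h (fst z) \<partial>\<nu>) = (\<integral>z. g (x0, fst z) \<partial>\<nu>)" if "\<nu> \<in> probs_on \<Omega>" for \<nu>
    proof (rule integral_cong_AE)
      show "AE z in \<nu>. h (fst z) = g (x0, fst z)"
        using that h(3) by (auto simp: probs_on_def elim: eventually_mono)
    qed (use that h(1) g in \<open>auto simp: probs_on_def intro!: borel_measurable_continuous_on_UNIV
          continuous_on_compose2[OF h(1)] continuous_on_compose2[OF g] continuous_intros\<close>)
    have "continuous_map weak_star euclidean (\<lambda>\<mu>. \<integral>z. h (fst z) \<partial>\<mu>)"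
      using h by (intro continuous_map_weak_star_integral continuous_on_compose2[OF h(1)])
        (auto intro: continuous_intros bounded_subset)
    then have "continuous_map ?X euclidean (\<lambda>q. \<integral>z. h (fst z) \<partial>fst q)"
      by (intro continuous_map_compose[OF continuous_map_from_subtopology[OF continuous_map_fst], unfolded o_def])
    then have "((\<lambda>q. \<integral>z. h (fst z) \<partial>fst q) \<longlongrightarrow> (\<integral>z. h (fst z) \<partial>\<nu>0)) ?F"
      using p_top by (auto simp: continuous_map_atin)
    moreover have "\<forall>\<^sub>F q in ?F. (\<integral>z. h (fst z) \<partial>fst q) = (\<integral>z. g (x0, fst z) \<partial>fst q)"
      using in_S by eventually_elim (auto intro: h_eq)
    ultimately have lim_fixed: "((\<lambda>q. \<integral>z. g (x0, fst z) \<partial>fst q) \<longlongrightarrow> (\<integral>z. g (x0, fst z) \<partial>\<nu>0)) ?F"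
      using h_eq[OF \<nu>0] by (simp add: tendsto_cong)
    have "continuous_map ?X euclidean snd"
      by (intro continuous_map_from_subtopology continuous_map_snd)
    then have lim_x: "(snd \<longlongrightarrow> x0) ?F"
      using p_top by (auto simp: continuous_map_atin)
    have lim_diff: "((\<lambda>q. (\<integral>z. g (snd q, fst z) \<partial>fst q) - (\<integral>z. g (x0, fst z) \<partial>fst q)) \<longlongrightarrow> 0) ?F"
    proof (rule tendstoI)
      fix e :: real assume "e > 0"
      then obtain \<delta> where "\<delta> > 0" and close: "\<And>\<nu> x. \<nu> \<in> probs_on \<Omega> \<Longrightarrow> x \<in> \<Omega> \<Longrightarrow> dist x x0 < \<delta> \<Longrightarrow>
          \<bar>(\<integral>z. g (x, fst z) \<partial>\<nu>) - (\<integral>z. g (x0, fst z) \<partial>\<nu>)\<bar> \<le> e / 2"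
        using integral_param_uniformly_close[OF \<Omega> g x0, of "e / 2"] by auto
      show "\<forall>\<^sub>F q in ?F. dist ((\<integral>z. g (snd q, fst z) \<partial>fst q) - (\<integral>z. g (x0, fst z) \<partial>fst q)) 0 < e"
        using in_S tendstoD[OF lim_x \<open>\<delta> > 0\<close>]
      proof eventually_elim
        case (elim q)
        then have "\<bar>(\<integral>z. g (snd q, fst z) \<partial>fst q) - (\<integral>z. g (x0, fst z) \<partial>fst q)\<bar> \<le> e / 2"
          by (intro close) (auto simp: mem_Times_iff)
        with \<open>e > 0\<close> show ?case
          by (simp add: dist_real_def)
      qed
    qed
    show ?thesis
      using tendsto_add[OF lim_diff lim_fixed] by simp
  qed
  then show ?thesis
    by (auto simp: continuous_map_atin)
qed

lemma continuous_map_vec_nth_iff: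
  fixes f :: "'a \<Rightarrow> real^'n"
  shows "continuous_map X euclidean f \<longleftrightarrow> (\<forall>i. continuous_map X euclidean (\<lambda>x. f x $ i))"
  unfolding continuous_map_atin limitin_canonical_iff by (auto intro: tendsto_vec_nth vec_tendstoI)

lemma continuous_map_integral_param_vec:
  fixes g :: "(real^'d) \<times> (real^'d) \<Rightarrow> real^'n"
  assumes \<Omega>: "compact \<Omega>" and g: "continuous_on UNIV g"
  shows "continuous_map (subtopology (prod_topology weak_star euclidean) (probs_on \<Omega> \<times> \<Omega>)) euclidean
           (\<lambda>q. \<integral>z. g (snd q, fst z) \<partial>fst q)"
  unfolding continuous_map_vec_nth_iff
proof
  fix i
  have gi: "continuous_on UNIV (\<lambda>p. g p $ i)"
    by (rule continuous_on_compose2[OF linear_continuous_on[OF bounded_linear_vec_nth] g]) auto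
  show "continuous_map (subtopology (prod_topology weak_star euclidean) (probs_on \<Omega> \<times> \<Omega>)) euclidean
      (\<lambda>q. (\<integral>z. g (snd q, fst z) \<partial>fst q) $ i)"
  proof (rule continuous_map_eq[OF continuous_map_integral_param[OF \<Omega> gi]])
    fix q assume "q \<in> topspace (subtopology (prod_topology weak_star euclidean) (probs_on \<Omega> \<times> \<Omega>))"
    then have "integrable (fst q) (\<lambda>z. g (snd q, fst z))"
      by (intro integrable_probs_on[OF \<Omega>] continuous_on_compose2[OF g])
         (auto simp: mem_Times_iff intro!: continuous_intros)
    then show "(\<integral>z. g (snd q, fst z) $ i \<partial>fst q) = (\<integral>z. g (snd q, fst z) \<partial>fst q) $ i"
      by (rule integral_bounded_linear[OF bounded_linear_vec_nth])
  qed
qed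

lemma continuous_map_scaleR [continuous_intros]:
  fixes g :: "'a \<Rightarrow> 'b::real_normed_vector"
  shows "continuous_map X euclidean f \<Longrightarrow> continuous_map X euclidean g \<Longrightarrow>
    continuous_map X euclidean (\<lambda>x. f x *\<^sub>R g x)"
  by (simp add: continuous_map_atin tendsto_scaleR)

lemma continuous_map_matrix_vector_mult [continuous_intros]:
  "continuous_map X euclidean f \<Longrightarrow> continuous_map X euclidean (\<lambda>x. (A::real^'a^'b) *v f x)"
  using continuous_map_compose[of X euclidean f euclidean "(*v) A"]
  by (simp add: o_def matrix_vector_mult_linear_continuous_on)

lemma continuous_map_sum_list:
  fixes f :: "'b \<Rightarrow> 'a \<Rightarrow> 'c::real_normed_vector"
  shows "(\<And>a. a \<in> set xs \<Longrightarrow> continuous_map X euclidean (f a)) \<Longrightarrow>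
    continuous_map X euclidean (\<lambda>x. \<Sum>a\<leftarrow>xs. f a x)"
  by (induction xs) (auto intro: continuous_map_add)

lemma integral_pos_prob_space:
  fixes f :: "'a \<Rightarrow> real"
  assumes "prob_space M" "integrable M f" "\<And>z. 0 < f z"
  shows "0 < integral\<^sup>L M f"
proof -
  have "integral\<^sup>L M f \<noteq> 0"
  proof
    assume "integral\<^sup>L M f = 0"
    then have "AE z in M. f z = 0"
      using assms(2,3) by (subst integral_nonneg_eq_0_iff_AE[symmetric]) (auto intro: less_imp_le)
    then have "AE z in M. False"
      by eventually_elim (use assms(3) in \<open>metis less_irrefl\<close>)
    with assms(1) show False
      by (simp add: prob_space.AE_False)
  qed
  moreover have "0 \<le> integral\<^sup>L M f"
    using assms(3) by (intro Bochner_Integration.integral_nonneg) (simp add: less_imp_le)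
  ultimately show ?thesis
    by simp
qed

lemma continuous_map_weighted_mean_param:
  fixes w :: "(real^'d) \<times> (real^'d) \<Rightarrow> real" and v :: "real^'d \<Rightarrow> real^'e"
  assumes \<Omega>: "compact \<Omega>" and w: "continuous_on UNIV w" "\<And>p. 0 < w p" and v: "continuous_on UNIV v"
  shows "continuous_map (subtopology (prod_topology weak_star euclidean) (probs_on \<Omega> \<times> \<Omega>)) euclidean
           (\<lambda>q. weighted_mean (fst q) (\<lambda>z. w (snd q, fst z)) (\<lambda>z. v (fst z)))"
  unfolding weighted_mean_def
proof (intro continuous_map_scaleR continuous_map_real_divide continuous_map_canonical_const)
  show "continuous_map (subtopology (prod_topology weak_star euclidean) (probs_on \<Omega> \<times> \<Omega>)) euclidean
      (\<lambda>q. \<integral>z. w (snd q, fst z) \<partial>fst q)"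
    by (rule continuous_map_integral_param[OF \<Omega> w(1)])
  show "continuous_map (subtopology (prod_topology weak_star euclidean) (probs_on \<Omega> \<times> \<Omega>)) euclidean
      (\<lambda>q. \<integral>z. w (snd q, fst z) *\<^sub>R v (fst z) \<partial>fst q)"
  proof (rule continuous_map_integral_param_vec[OF \<Omega>, of "\<lambda>p. w p *\<^sub>R v (snd p)", simplified])
    show "continuous_on UNIV (\<lambda>p. w p *\<^sub>R v (snd p))"
      using w(1) by (intro continuous_intros continuous_on_compose2[OF v]) auto
  qed
  fix q assume "q \<in> topspace (subtopology (prod_topology weak_star euclidean) (probs_on \<Omega> \<times> \<Omega>))"
  then have q: "fst q \<in> probs_on \<Omega>"
    by (auto simp: mem_Times_iff)
  have "integrable (fst q) (\<lambda>z. w (snd q, fst z))"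
    by (intro integrable_probs_on[OF \<Omega> q] continuous_on_compose2[OF w(1)]) (auto intro!: continuous_intros)
  with q have "0 < (\<integral>z. w (snd q, fst z) \<partial>fst q)"
    by (intro integral_pos_prob_space w(2)) (auto simp: probs_on_def)
  then show "(\<integral>z. w (snd q, fst z) \<partial>fst q) \<noteq> 0"
    by simp
qed

lemma continuous_map_attn_unmasked:
  fixes \<theta> :: "('d::finite, 'k::finite, 'e::finite) attn_params"
  assumes \<Omega>: "compact \<Omega>"
  shows "continuous_map (subtopology (prod_topology weak_star euclidean) (probs_on \<Omega> \<times> \<Omega>)) euclidean
           (\<lambda>q. attn_unmasked \<theta> (fst q) (snd q))"
  unfolding attn_unmasked_def
proof (intro continuous_map_add continuous_map_sum_list)
  show "continuous_map (subtopology (prod_topology weak_star euclidean) (probs_on \<Omega> \<times> \<Omega>)) euclidean snd"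
    by (intro continuous_map_from_subtopology continuous_map_snd)
  fix a :: "(real^'e^'d) \<times> (real^'d^'k) \<times> (real^'d^'k) \<times> (real^'d^'e)"
  obtain W K Q V where a: "a = (W, K, Q, V)"
    by (cases a) auto
  have "continuous_map (subtopology (prod_topology weak_star euclidean) (probs_on \<Omega> \<times> \<Omega>)) euclidean
      (\<lambda>q. weighted_mean (fst q) (\<lambda>z. attn_kernel K Q (snd q) (fst z)) (\<lambda>z. V *v fst z))"
    using continuous_map_weighted_mean_param[where w = "\<lambda>p. attn_kernel K Q (fst p) (snd p)",
        OF \<Omega> _ attn_kernel_pos matrix_vector_mult_linear_continuous_on]
    by (simp add: continuous_on_attn_kernel continuous_on_fst continuous_on_snd)
  then show "continuous_map (subtopology (prod_topology weak_star euclidean) (probs_on \<Omega> \<times> \<Omega>)) euclidean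
      (\<lambda>q. case a of (W, K, Q, V) \<Rightarrow> W *v weighted_mean (fst q) (\<lambda>z. attn_kernel K Q (snd q) (fst z)) (\<lambda>z. V *v fst z))"
    unfolding a by (simp add: continuous_map_matrix_vector_mult)
qed

theorem lemmaC2:
  fixes \<Omega> :: "(real^'d) set" and C \<sigma> :: real
    and \<theta> :: "('d, 'k::finite, 'e::finite) attn_params"
  assumes "compact \<Omega>" and "C > 0" and "0 < \<sigma>" and "\<sigma> < 1"
  shows "(causal \<Omega> C \<sigma> (attn \<theta>) \<and> identifiable \<Omega> C \<sigma> (attn \<theta>)) \<and>
         (\<forall>\<mu>\<in>LipC \<Omega> C \<sigma>. \<forall>x\<in>\<Omega>. \<forall>t\<in>{0..1}.
            attn \<theta> \<mu> x t = reduced (attn \<theta>) (masked \<mu> t) x) \<and>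
         continuous_map (subtopology (prod_topology weak_star euclidean) (Xset \<Omega> C \<sigma>)) euclidean
           (\<lambda>(\<nu>, x). reduced (attn \<theta>) \<nu> x)"
proof (intro conjI)
  note unmasked = attn_masked_LipC_eq_attn_unmasked[OF _ \<open>0 < \<sigma>\<close>]
  have causal: "attn \<theta> \<mu> x t = attn \<theta> (masked \<mu> t) x t" if "\<mu> \<in> LipC \<Omega> C \<sigma>" "t \<in> {0..1}" for \<mu> x t
    using subsetD[OF LipC_subset_probs_on that(1)] measure_tmarg_window_pos[OF that(1) \<open>0 < \<sigma>\<close>] that(2)
    by (intro attn_masked[symmetric]) (auto simp: probs_on_def)
  then show "causal \<Omega> C \<sigma> (attn \<theta>)"
    by (simp add: causal_def)
  show "identifiable \<Omega> C \<sigma> (attn \<theta>)"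
    unfolding identifiable_def by (metis unmasked(1))
  show "\<forall>\<mu>\<in>LipC \<Omega> C \<sigma>. \<forall>x\<in>\<Omega>. \<forall>t\<in>{0..1}. attn \<theta> \<mu> x t = reduced (attn \<theta>) (masked \<mu> t) x"
    using causal unmasked by (metis atLeastAtMost_iff)
  have "Xset \<Omega> C \<sigma> \<subseteq> probs_on \<Omega> \<times> \<Omega>"
    using masked_LipC(1)[OF _ \<open>0 < \<sigma>\<close>] by (auto simp: Xset_def)
  from continuous_map_from_subtopology_mono[OF continuous_map_attn_unmasked[OF \<open>compact \<Omega>\<close>] this]
  show "continuous_map (subtopology (prod_topology weak_star euclidean) (Xset \<Omega> C \<sigma>)) euclidean
      (\<lambda>(\<nu>, x). reduced (attn \<theta>) \<nu> x)"
    by (rule continuous_map_eq) (auto simp: Xset_def unmasked(2))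
qed

end
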